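(* Let $p \geq 2$ be an integer and $\mathbf{x},\mathbf{y} \in \operatorname{inc}(\mathbb{R},p)$ with $1 + x_jy_k > 0$ for all $j,k$. Let $C := (1+x_jy_k)_{j,k=1}^p$ and $C^{\circ\alpha} := ((1+x_jy_k)^\alpha)_{j,k=1}^p$. \begin{enumerate} \item If $\alpha > p-2$, then $C^{\circ\alpha}$ is $\mathrm{TP}$ (all minors of all orders are positive). \item If $\alpha \in \{0,1,\dots,p-2\}$, then $C^{\circ\alpha}$ has rank $\alpha+1$. \item If $\alpha \in (0,p-2)\setminus\mathbb{Z}$, then $C^{\circ\alpha}$ is not $\mathrm{TN}$; in fact there is a nonempty index set $J \subset \{1,\dots,p\}$ such that the principal minor $\det((1+x_jy_k)^\alpha)_{j,k\in J}$ is negative. \end{enumerate}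
   Context: For an integer $r \geq 1$, $\operatorname{inc}(\mathbb{R},r)$ denotes the set of $r$-tuples $(x_1,\dots,x_r) \in \mathbb{R}^r$ with $x_1 < \cdots < x_r$. A real matrix is $\mathrm{TN}$ (resp. $\mathrm{TP}$) if all its minors are $\ge0$ (resp. $>0$). *)

theory Defs
  imports Complex_Main "Jordan_Normal_Form.DL_Rank" "Jordan_Normal_Form.DL_Submatrix"
begin

text \<open>Real vectors (x_1,...,x_p) are modelled as functions nat => real on indices 0..p-1.\<close>

definition inc_vec :: "nat \<Rightarrow> (nat \<Rightarrow> real) \<Rightarrow> bool" where
  "inc_vec p x \<longleftrightarrow> (\<forall>i j. i < j \<and> j < p \<longrightarrow> x i < x j)"

definition TN_mat :: "real mat \<Rightarrow> bool" where
  "TN_mat A \<longleftrightarrow> (\<forall>I J. I \<subseteq> {0..<dim_row A} \<and> J \<subseteq> {0..<dim_col A} \<and> I \<noteq> {} \<and> card I = card J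
      \<longrightarrow> det (submatrix A I J) \<ge> 0)"

definition TP_mat :: "real mat \<Rightarrow> bool" where
  "TP_mat A \<longleftrightarrow> (\<forall>I J. I \<subseteq> {0..<dim_row A} \<and> J \<subseteq> {0..<dim_col A} \<and> I \<noteq> {} \<and> card I = card J
      \<longrightarrow> det (submatrix A I J) > 0)"

definition Cpow :: "nat \<Rightarrow> (nat \<Rightarrow> real) \<Rightarrow> (nat \<Rightarrow> real) \<Rightarrow> real \<Rightarrow> real mat" where
  "Cpow p x y \<alpha> = mat p p (\<lambda>(j,k). (1 + x j * y k) powr \<alpha>)"

end

theory Submission
  imports Defs "Jordan_Normal_Form.DL_Rank_Submatrix"
begin

text \<open>Every minor of \<open>((1 + x j * y k) powr a)\<close> is a matrix of the same kind, so everything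
  reduces to the sign of \<open>D\<^sub>n(a) = det ((1 + t i * y k) powr a)\<^sub>i\<^sub>,\<^sub>k\<^sub><\<^sub>n\<close> for increasing \<open>t\<close> and
  \<open>y\<close>. Rescaling rows by positive factors and substituting \<open>t \<mapsto> t / (1 + t * y (n - 1))\<close>,
  \<open>y \<mapsto> y - y (n - 1)\<close> makes the last column constant; the mean value theorem applied row by row
  then writes \<open>D\<^sub>n(a)\<close> as \<open>a ^ (n - 1)\<close> times a positive number times a determinant \<open>D\<^sub>n\<^sub>-\<^sub>1(a - 1)\<close>
  at interlacing nodes. Hence \<open>sgn D\<^sub>n(a) = (\<Prod>j<n. sgn (a - j) ^ (n - 1 - j))\<close> whenever
  \<open>a \<notin> {0, \<dots>, n - 2}\<close>; this is \<open>1\<close> for \<open>a > n - 2\<close>, and \<open>-1\<close> for \<open>n = \<lfloor>a\<rfloor> + 3\<close> when \<open>a\<close> is not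
  an integer.\<close>

lemma det_scale_rows:
  "det (mat n n (\<lambda>(i,k). c i * F i k)) = prod c {0..<n} * det (mat n n (\<lambda>(i,k). F i k))"
proof -
  have "mat n n (\<lambda>(i,k). c i * F i k) = mat\<^sub>r n n (\<lambda>i. c i \<cdot>\<^sub>v vec n (F i))"
    by (rule eq_matI) auto
  moreover have "mat n n (\<lambda>(i,k). F i k) = mat\<^sub>r n n (\<lambda>i. vec n (F i))"
    by (rule eq_matI) auto
  ultimately show ?thesis
    using det_rows_mul[of "\<lambda>i. vec n (F i)" n c] by auto
qed

lemma det_scale_cols:
  "det (mat n n (\<lambda>(i,k). c k * F i k)) = prod c {0..<n} * det (mat n n (\<lambda>(i,k). F i k))"
proof -
  have transp: "mat n n (\<lambda>(i,k). G i k) = transpose_mat (mat n n (\<lambda>(k,i). G i k))" for G :: "nat \<Rightarrow> nat \<Rightarrow> 'a"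
    by (rule eq_matI) auto
  have "det (mat n n (\<lambda>(i,k). c k * F i k)) = det (mat n n (\<lambda>(k,i). c k * F i k))"
    by (subst transp) (rule det_transpose, auto)
  also have "\<dots> = prod c {0..<n} * det (mat n n (\<lambda>(k,i). F i k))"
    by (rule det_scale_rows)
  also have "det (mat n n (\<lambda>(k,i). F i k)) = det (mat n n (\<lambda>(i,k). F i k))"
    by (subst (2) transp) (rule det_transpose[symmetric], auto)
  finally show ?thesis .
qed

lemma det_replace_row:
  assumes "m < n"
  shows "det (mat n n (\<lambda>(i,k). if i = m then w k else F i k)) =
    (\<Sum>k<n. w k * cofactor (mat n n (\<lambda>(i,k). if i = m then 0 else F i k)) m k)"
proof -
  let ?A = "mat n n (\<lambda>(i,k). if i = m then w k else F i k)"
  have "det ?A = (\<Sum>k<n. ?A $$ (m,k) * cofactor ?A m k)"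
    by (rule laplace_expansion_row) (use assms in auto)
  also have "\<dots> = (\<Sum>k<n. w k * cofactor (mat n n (\<lambda>(i,k). if i = m then 0 else F i k)) m k)"
  proof (rule sum.cong[OF refl])
    fix k assume k: "k \<in> {..<n}"
    have "mat_delete ?A m k = mat_delete (mat n n (\<lambda>(i,k). if i = m then 0 else F i k)) m k"
      unfolding mat_delete_def by (rule eq_matI) auto
    then show "?A $$ (m,k) * cofactor ?A m k
        = w k * cofactor (mat n n (\<lambda>(i,k). if i = m then 0 else F i k)) m k"
      using k assms by (simp add: cofactor_def)
  qed
  finally show ?thesis .
qed

lemma det_last_col_unit:
  assumes "\<And>i. i < n \<Longrightarrow> F i n = 0" and "F n n = 1"
  shows "det (mat (Suc n) (Suc n) (\<lambda>(i,k). F i k)) = det (mat n n (\<lambda>(i,k). F i k))"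
proof -
  let ?A = "mat (Suc n) (Suc n) (\<lambda>(i,k). F i k)"
  have "det ?A = (\<Sum>i<Suc n. ?A $$ (i,n) * cofactor ?A i n)"
    by (rule laplace_expansion_column) auto
  also have "\<dots> = det (mat_delete ?A n n)"
    using assms by (simp add: cofactor_def)
  also have "mat_delete ?A n n = mat n n (\<lambda>(i,k). F i k)"
    unfolding mat_delete_def by (rule eq_matI) auto
  finally show ?thesis .
qed

text \<open>Rolle's argument applied to one row: the determinant is affine in row \<open>m\<close>, and it
  vanishes when row \<open>m\<close> equals row \<open>m + 1\<close>.\<close>

lemma det_row_mean_value:
  fixes g g' :: "real \<Rightarrow> nat \<Rightarrow> real"
  assumes "Suc m < n" and "a < b" and next_row: "\<And>k. F (Suc m) k = g b k"
    and deriv: "\<And>s k. a \<le> s \<Longrightarrow> s \<le> b \<Longrightarrow> k < n \<Longrightarrow> ((\<lambda>s. g s k) has_real_derivative g' s k) (at s)"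
  shows "\<exists>\<zeta>. a < \<zeta> \<and> \<zeta> < b \<and>
    det (mat n n (\<lambda>(i,k). if i = m then g a k else F i k)) =
    (a - b) * det (mat n n (\<lambda>(i,k). if i = m then g' \<zeta> k else F i k))"
proof -
  define C where "C k = cofactor (mat n n (\<lambda>(i,k). if i = m then 0 else F i k)) m k" for k
  have row_expansion: "det (mat n n (\<lambda>(i,k). if i = m then w k else F i k)) = (\<Sum>k<n. w k * C k)" for w
    unfolding C_def using assms(1) by (intro det_replace_row) simp
  define \<phi> where "\<phi> s = (\<Sum>k<n. g s k * C k)" for s
  have \<phi>_deriv: "(\<phi> has_real_derivative (\<Sum>k<n. g' s k * C k)) (at s)" if "a \<le> s" "s \<le> b" for s
    unfolding \<phi>_def by (intro DERIV_sum DERIV_cmult_right deriv) (use that in auto)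
  obtain \<zeta> where \<zeta>: "a < \<zeta>" "\<zeta> < b" "\<phi> b - \<phi> a = (b - a) * (\<Sum>k<n. g' \<zeta> k * C k)"
    using MVT2[OF \<open>a < b\<close> \<phi>_deriv] by blast
  have "\<phi> b = det (mat n n (\<lambda>(i,k). if i = m then g b k else F i k))"
    unfolding \<phi>_def row_expansion ..
  also have "\<dots> = 0"
    by (rule det_identical_rows[of _ n m "Suc m"]) (use assms(1) next_row in \<open>auto intro!: eq_vecI\<close>)
  finally have "\<phi> b = 0" .
  with \<zeta> show ?thesis
    unfolding \<phi>_def row_expansion[symmetric] by (intro exI[of _ \<zeta>]) (simp add: algebra_simps)
qed

lemma inc_vec_le: "inc_vec n u \<Longrightarrow> i \<le> j \<Longrightarrow> j < n \<Longrightarrow> u i \<le> u j"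
  by (cases "i = j") (auto simp: inc_vec_def less_imp_le)

lemma det_rows_mean_value:
  fixes g g' :: "real \<Rightarrow> nat \<Rightarrow> real"
  assumes u: "inc_vec n u"
    and deriv: "\<And>s k. u 0 \<le> s \<Longrightarrow> s \<le> u (n - 1) \<Longrightarrow> k < n \<Longrightarrow> ((\<lambda>s. g s k) has_real_derivative g' s k) (at s)"
  shows "m < n \<Longrightarrow> \<exists>\<xi>. (\<forall>i<m. u i < \<xi> i \<and> \<xi> i < u (Suc i)) \<and>
    det (mat n n (\<lambda>(i,k). g (u i) k)) =
    (\<Prod>i<m. u i - u (Suc i)) * det (mat n n (\<lambda>(i,k). if i < m then g' (\<xi> i) k else g (u i) k))"
proof (induction m)
  case 0
  then show ?case by simp
next
  case (Suc m)
  then obtain \<xi> where \<xi>: "\<forall>i<m. u i < \<xi> i \<and> \<xi> i < u (Suc i)" and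
    det_eq: "det (mat n n (\<lambda>(i,k). g (u i) k)) =
      (\<Prod>i<m. u i - u (Suc i)) * det (mat n n (\<lambda>(i,k). if i < m then g' (\<xi> i) k else g (u i) k))"
    by auto
  define F where "F i k = (if i < m then g' (\<xi> i) k else g (u i) k)" for i k
  have "u 0 \<le> u m" "u (Suc m) \<le> u (n - 1)" "u m < u (Suc m)"
    using Suc.prems u by (auto intro: inc_vec_le simp: inc_vec_def)
  then obtain \<zeta> where \<zeta>: "u m < \<zeta>" "\<zeta> < u (Suc m)" and
    step: "det (mat n n (\<lambda>(i,k). if i = m then g (u m) k else F i k)) =
      (u m - u (Suc m)) * det (mat n n (\<lambda>(i,k). if i = m then g' \<zeta> k else F i k))"
    using det_row_mean_value[of m n "u m" "u (Suc m)" F g g'] Suc.prems deriv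
    by (force simp: F_def)
  define \<xi>' where "\<xi>' = \<xi>(m := \<zeta>)"
  have "mat n n (\<lambda>(i,k). if i = m then g (u m) k else F i k) =
      mat n n (\<lambda>(i,k). if i < m then g' (\<xi> i) k else g (u i) k)"
    by (rule eq_matI) (auto simp: F_def)
  moreover have "mat n n (\<lambda>(i,k). if i = m then g' \<zeta> k else F i k) =
      mat n n (\<lambda>(i,k). if i < Suc m then g' (\<xi>' i) k else g (u i) k)"
    by (rule eq_matI) (auto simp: F_def \<xi>'_def)
  moreover have "\<forall>i<Suc m. u i < \<xi>' i \<and> \<xi>' i < u (Suc i)"
    using \<xi> \<zeta> by (auto simp: \<xi>'_def less_Suc_eq)
  ultimately show ?case
    using det_eq step by (intro exI[of _ \<xi>']) (simp add: mult.assoc)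
qed

lemma one_plus_mult_pos_between:
  fixes a b s z :: real
  assumes "0 < 1 + a * z" "0 < 1 + b * z" "a \<le> s" "s \<le> b"
  shows "0 < 1 + s * z"
proof (cases "z \<ge> 0")
  case True
  then have "a * z \<le> s * z" using assms(3) by (simp add: mult_right_mono)
  then show ?thesis using assms by linarith
next
  case False
  then have "b * z \<le> s * z" using assms(4) by (simp add: mult_right_mono_neg)
  then show ?thesis using assms by linarith
qed

lemma one_plus_mult_shift:
  fixes s t c :: real
  assumes "1 + s * c \<noteq> 0"
  shows "1 + s / (1 + s * c) * (t - c) = (1 + s * t) / (1 + s * c)"
  using assms by (simp add: field_simps)

lemma frac_one_plus_mult_strict_mono:
  fixes s t c :: real
  assumes "s < t" "0 < 1 + s * c" "0 < 1 + t * c"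
  shows "s / (1 + s * c) < t / (1 + t * c)"
  using assms by (simp add: field_simps)

lemma det_Cpow_shift:
  assumes pos_c: "\<And>i. i < n \<Longrightarrow> 0 < 1 + t i * c"
    and pos: "\<And>i k. i < n \<Longrightarrow> k < n \<Longrightarrow> 0 < 1 + t i * y k"
  shows "det (Cpow n t y a) =
    (\<Prod>i<n. (1 + t i * c) powr a) * det (Cpow n (\<lambda>i. t i / (1 + t i * c)) (\<lambda>k. y k - c) a)"
proof -
  have entry: "(1 + t i * y k) powr a = (1 + t i * c) powr a * (1 + t i / (1 + t i * c) * (y k - c)) powr a"
    if "i < n" "k < n" for i k
  proof -
    have c: "0 < 1 + t i * c" and ty: "0 < 1 + t i * y k"
      using pos_c pos that by auto
    have "1 + t i / (1 + t i * c) * (y k - c) = (1 + t i * y k) / (1 + t i * c)"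
      using c by (intro one_plus_mult_shift) simp
    with c ty show ?thesis
      by (simp add: powr_divide)
  qed
  have "Cpow n t y a = mat n n (\<lambda>(i,k). (1 + t i * c) powr a * (1 + t i / (1 + t i * c) * (y k - c)) powr a)"
    unfolding Cpow_def using entry by (intro eq_matI) auto
  then show ?thesis
    by (simp add: det_scale_rows Cpow_def atLeast0LessThan)
qed

text \<open>Once the last column of \<open>z\<close> vanishes, the last column of the kernel is constant and the
  row-wise mean value theorem lowers the exponent by one.\<close>

lemma det_Cpow_mean_value:
  assumes u: "inc_vec (Suc n) u" and "z n = 0"
    and pos: "\<And>i k. i < Suc n \<Longrightarrow> k < Suc n \<Longrightarrow> 0 < 1 + u i * z k"
  shows "\<exists>\<xi>. (\<forall>i<n. u i < \<xi> i \<and> \<xi> i < u (Suc i)) \<and>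
    det (Cpow (Suc n) u z a) = (\<Prod>i<n. u i - u (Suc i)) * (\<Prod>k<n. a * z k) * det (Cpow n \<xi> z (a - 1))"
proof -
  define g where "g s k = (1 + s * z k) powr a" for s k
  define g' where "g' s k = a * (1 + s * z k) powr (a - 1) * z k" for s k
  have deriv: "((\<lambda>s. g s k) has_real_derivative g' s k) (at s)"
    if "u 0 \<le> s" "s \<le> u (Suc n - 1)" "k < Suc n" for s k
  proof -
    have "0 < 1 + s * z k"
      by (rule one_plus_mult_pos_between[OF pos[of 0 k] pos[of n k]]) (use that in auto)
    then show ?thesis
      unfolding g_def g'_def by (auto intro!: derivative_eq_intros)
  qed
  from det_rows_mean_value[where g = g and g' = g' and m = n, OF u deriv]
  obtain \<xi> where \<xi>: "\<forall>i<n. u i < \<xi> i \<and> \<xi> i < u (Suc i)"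
    and det_eq: "det (mat (Suc n) (Suc n) (\<lambda>(i,k). g (u i) k)) =
      (\<Prod>i<n. u i - u (Suc i)) * det (mat (Suc n) (Suc n) (\<lambda>(i,k). if i < n then g' (\<xi> i) k else g (u i) k))"
    by auto
  have "det (mat (Suc n) (Suc n) (\<lambda>(i,k). if i < n then g' (\<xi> i) k else g (u i) k))
      = det (mat n n (\<lambda>(i,k). if i < n then g' (\<xi> i) k else g (u i) k))"
    by (rule det_last_col_unit) (auto simp: g'_def g_def \<open>z n = 0\<close>)
  also have "mat n n (\<lambda>(i,k). if i < n then g' (\<xi> i) k else g (u i) k)
      = mat n n (\<lambda>(i,k). (a * z k) * (1 + \<xi> i * z k) powr (a - 1))"
    by (rule eq_matI) (auto simp: g'_def)
  also have "det \<dots> = (\<Prod>k<n. a * z k) * det (Cpow n \<xi> z (a - 1))"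
    by (simp add: det_scale_cols Cpow_def atLeast0LessThan)
  finally show ?thesis
    using \<xi> det_eq by (intro exI[of _ \<xi>]) (simp add: Cpow_def g_def mult.assoc)
qed

text \<open>\<open>Cpow_sign n a = (\<Prod>j<n. sgn (a - j) ^ (n - 1 - j))\<close>\<close>

fun Cpow_sign :: "nat \<Rightarrow> real \<Rightarrow> real" where
  "Cpow_sign 0 a = 1"
| "Cpow_sign (Suc n) a = sgn a ^ n * Cpow_sign n (a - 1)"

lemma Cpow_sign_eq_1: "real n - 2 < a \<Longrightarrow> Cpow_sign n a = 1"
proof (induction n arbitrary: a)
  case 0
  then show ?case by simp
next
  case (Suc n)
  then have "Cpow_sign n (a - 1) = 1" by simp
  moreover have "sgn a ^ n = 1"
    using Suc.prems by (cases n) auto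
  ultimately show ?case by simp
qed

lemma Cpow_sign_eq_minus_1: "3 \<le> n \<Longrightarrow> real n - 3 < a \<Longrightarrow> a < real n - 2 \<Longrightarrow> Cpow_sign n a = -1"
proof (induction n arbitrary: a rule: nat_induct_at_least)
  case base
  then show ?case by (simp add: numeral_3_eq_3)
next
  case (Suc n)
  then show ?case by simp
qed

lemma inc_vec_interlacing:
  assumes "inc_vec (Suc n) u" and "\<forall>i<n. u i < \<xi> i \<and> \<xi> i < u (Suc i)"
  shows "inc_vec n \<xi>"
  unfolding inc_vec_def
proof (intro allI impI)
  fix i j assume ij: "i < j \<and> j < n"
  with assms(2) have "\<xi> i < u (Suc i)" "u j < \<xi> j" by auto
  moreover have "u (Suc i) \<le> u j"
    using ij by (intro inc_vec_le[OF assms(1)]) auto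
  ultimately show "\<xi> i < \<xi> j" by linarith
qed

lemma det_Cpow_reduce:
  assumes t: "inc_vec (Suc n) t" and y: "inc_vec (Suc n) y"
    and pos: "\<And>i k. i < Suc n \<Longrightarrow> k < Suc n \<Longrightarrow> 0 < 1 + t i * y k"
  obtains c \<xi> z where "0 < c" "inc_vec n \<xi>" "inc_vec n z"
    "\<And>i k. i < n \<Longrightarrow> k < n \<Longrightarrow> 0 < 1 + \<xi> i * z k"
    "det (Cpow (Suc n) t y a) = c * a ^ n * det (Cpow n \<xi> z (a - 1))"
proof -
  define u where "u i = t i / (1 + t i * y n)" for i
  define z where "z k = y k - y n" for k
  have pos_n: "0 < 1 + t i * y n" if "i < Suc n" for i
    using pos that by simp
  have pos_uz: "0 < 1 + u i * z k" if "i < Suc n" "k < Suc n" for i k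
    using pos[OF that] pos_n[OF that(1)]
    by (simp add: u_def z_def one_plus_mult_shift less_imp_neq[symmetric] del: times_divide_eq_left)
  have u: "inc_vec (Suc n) u"
    using t pos_n unfolding inc_vec_def u_def by (auto intro: frac_one_plus_mult_strict_mono)
  have shift: "det (Cpow (Suc n) t y a) = (\<Prod>i<Suc n. (1 + t i * y n) powr a) * det (Cpow (Suc n) u z a)"
    unfolding u_def z_def using pos_n pos by (intro det_Cpow_shift)
  obtain \<xi> where \<xi>: "\<forall>i<n. u i < \<xi> i \<and> \<xi> i < u (Suc i)"
    and det_uz: "det (Cpow (Suc n) u z a) =
      (\<Prod>i<n. u i - u (Suc i)) * (\<Prod>k<n. a * z k) * det (Cpow n \<xi> z (a - 1))"
    using det_Cpow_mean_value[where z = z and a = a, OF u _ pos_uz] by (auto simp: z_def)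
  define c where "c = (\<Prod>i<Suc n. (1 + t i * y n) powr a) * (\<Prod>i<n. (u i - u (Suc i)) * z i)"
  show thesis
  proof
    have "0 < (\<Prod>i<Suc n. (1 + t i * y n) powr a)"
    proof (intro prod_pos)
      fix i assume "i \<in> {..<Suc n}"
      with pos_n[of i] show "0 < (1 + t i * y n) powr a" by simp
    qed
    moreover have "0 < (\<Prod>i<n. (u i - u (Suc i)) * z i)"
      using u y by (intro prod_pos) (auto simp: inc_vec_def z_def mult_neg_neg)
    ultimately show "0 < c"
      unfolding c_def by simp
    show "inc_vec n \<xi>"
      by (rule inc_vec_interlacing[OF u \<xi>])
    show "inc_vec n z"
      using y by (simp add: inc_vec_def z_def)
    show "0 < 1 + \<xi> i * z k" if "i < n" "k < n" for i k
      using one_plus_mult_pos_between[OF pos_uz[of i k] pos_uz[of "Suc i" k], of "\<xi> i"] \<xi> that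
      by force
    show "det (Cpow (Suc n) t y a) = c * a ^ n * det (Cpow n \<xi> z (a - 1))"
      unfolding shift det_uz c_def by (simp add: prod.distrib mult_ac)
  qed
qed

lemma det_Cpow_sign:
  assumes "1 \<le> n" and "inc_vec n t" "inc_vec n y"
    and "\<And>i k. i < n \<Longrightarrow> k < n \<Longrightarrow> 0 < 1 + t i * y k"
    and "\<And>j::nat. j + 2 \<le> n \<Longrightarrow> a \<noteq> real j"
  shows "0 < Cpow_sign n a * det (Cpow n t y a)"
  using assms
proof (induction n arbitrary: a t y rule: nat_induct_at_least)
  case base
  have "det (Cpow 1 t y a) = (1 + t 0 * y 0) powr a"
    by (simp add: Cpow_def det_single)
  with base.prems(3)[of 0 0] show ?case by simp
next
  case (Suc n)
  obtain c \<xi> z where "0 < c" and reduced: "inc_vec n \<xi>" "inc_vec n z"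
      "\<And>i k. i < n \<Longrightarrow> k < n \<Longrightarrow> 0 < 1 + \<xi> i * z k"
    and det_eq: "det (Cpow (Suc n) t y a) = c * a ^ n * det (Cpow n \<xi> z (a - 1))"
    using det_Cpow_reduce[OF Suc.prems(1-3)] by metis
  have "0 < Cpow_sign n (a - 1) * det (Cpow n \<xi> z (a - 1))"
  proof (rule Suc.IH[OF reduced])
    show "a - 1 \<noteq> real j" if "j + 2 \<le> n" for j
      using Suc.prems(4)[of "Suc j"] that by auto
  qed
  moreover have "0 < sgn a * a"
    using Suc.prems(4)[of 0] Suc.hyps by (auto simp: sgn_if)
  ultimately have "0 < c * (sgn a * a) ^ n * (Cpow_sign n (a - 1) * det (Cpow n \<xi> z (a - 1)))"
    using \<open>0 < c\<close> by simp
  then show ?case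
    unfolding det_eq by (simp add: power_mult_distrib mult_ac)
qed

lemma submatrix_Cpow:
  assumes "I \<subseteq> {0..<p}" "J \<subseteq> {0..<p}" "card I = card J"
  shows "submatrix (Cpow p x y a) I J = Cpow (card I) (\<lambda>i. x (pick I i)) (\<lambda>k. y (pick J k)) a"
proof -
  have "{i. i < dim_row (Cpow p x y a) \<and> i \<in> I} = I" "{i. i < dim_col (Cpow p x y a) \<and> i \<in> J} = J"
    using assms by (auto simp: Cpow_def)
  moreover have "pick I i < p" if "i < card I" for i
    using pick_in_set[of i I] that assms by auto
  moreover have "pick J i < p" if "i < card J" for i
    using pick_in_set[of i J] that assms by auto
  ultimately show ?thesis
    unfolding submatrix_def by (intro eq_matI) (use assms(3) in \<open>auto simp: Cpow_def\<close>)
qed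

lemma inc_vec_pick:
  assumes "inc_vec p x" "I \<subseteq> {0..<p}"
  shows "inc_vec (card I) (\<lambda>i. x (pick I i))"
  unfolding inc_vec_def
proof (intro allI impI)
  fix i j assume ij: "i < j \<and> j < card I"
  then have "pick I i < pick I j" "pick I j \<in> I"
    using pick_mono[of j I i] pick_in_set[of j I] by auto
  with assms show "x (pick I i) < x (pick I j)"
    unfolding inc_vec_def by auto
qed

lemma Cpow_minor_sign:
  assumes x: "inc_vec p x" and y: "inc_vec p y"
    and pos: "\<And>j k. j < p \<Longrightarrow> k < p \<Longrightarrow> 0 < 1 + x j * y k"
    and IJ: "I \<subseteq> {0..<p}" "J \<subseteq> {0..<p}" "I \<noteq> {}" "card I = card J"
    and not_int: "\<And>j::nat. j + 2 \<le> card I \<Longrightarrow> a \<noteq> real j"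
  shows "0 < Cpow_sign (card I) a * det (submatrix (Cpow p x y a) I J)"
proof -
  have "finite I" "finite J"
    using IJ(1,2) finite_subset by auto
  with IJ(3) have "1 \<le> card I"
    by (simp add: Suc_le_eq card_gt_0_iff)
  moreover have "pick I i < p" "pick J k < p" if "i < card I" "k < card I" for i k
    using pick_in_set[of i I] pick_in_set[of k J] that IJ by auto
  ultimately show ?thesis
    unfolding submatrix_Cpow[OF IJ(1,2,4)]
    using inc_vec_pick[OF x IJ(1)] inc_vec_pick[OF y IJ(2)] IJ(4) pos not_int
    by (intro det_Cpow_sign) auto
qed

lemma Cpow_TP:
  assumes "inc_vec p x" "inc_vec p y" "\<And>j k. j < p \<Longrightarrow> k < p \<Longrightarrow> 0 < 1 + x j * y k"
    and "real p - 2 < a"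
  shows "TP_mat (Cpow p x y a)"
  unfolding TP_mat_def
proof (intro allI impI)
  fix I J
  assume "I \<subseteq> {0..<dim_row (Cpow p x y a)} \<and> J \<subseteq> {0..<dim_col (Cpow p x y a)} \<and> I \<noteq> {} \<and> card I = card J"
  then have IJ: "I \<subseteq> {0..<p}" "J \<subseteq> {0..<p}" "I \<noteq> {}" "card I = card J"
    by (auto simp: Cpow_def)
  have "card I \<le> p"
    using card_mono[OF _ IJ(1)] by simp
  with assms(4) have "real (card I) - 2 < a" by linarith
  then have "Cpow_sign (card I) a = 1" "\<And>j. j + 2 \<le> card I \<Longrightarrow> a \<noteq> real j"
    by (auto intro: Cpow_sign_eq_1)
  with Cpow_minor_sign[of p x y I J a] assms IJ
  show "0 < det (submatrix (Cpow p x y a) I J)"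
    by simp
qed

lemma rank_sum_of_products_le:
  fixes f g :: "nat \<Rightarrow> nat \<Rightarrow> 'a :: field"
  shows "vec_space.rank n (mat n n (\<lambda>(j,k). \<Sum>i<q. f i j * g i k)) \<le> q"
proof (induction q)
  case 0
  have zero: "mat n n (\<lambda>(j,k). \<Sum>i<0. f i j * g i k) = 0\<^sub>m n n"
    by (rule eq_matI) auto
  show ?case
    unfolding zero vec_space.rank_0I by simp
next
  case (Suc q)
  let ?B = "mat n n (\<lambda>(j,k). \<Sum>i<q. f i j * g i k)"
  let ?R = "mat n n (\<lambda>(j,k). f q j * g q k)"
  have "mat n n (\<lambda>(j,k). \<Sum>i<Suc q. f i j * g i k) = ?B + ?R"
    by (rule eq_matI) auto
  moreover have "vec_space.rank n (?B + ?R) \<le> vec_space.rank n ?B + vec_space.rank n ?R"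
    by (rule vec_space.rank_subadditive) auto
  moreover have "vec_space.rank n ?R \<le> 1"
    by (rule vec_space.rank_le_1_product_entries[of _ n n "f q" "g q"]) auto
  ultimately show ?case
    using Suc.IH by simp
qed

text \<open>For \<open>a = m\<close> the binomial theorem writes the kernel as a sum of \<open>m + 1\<close> rank-one matrices,
  while its leading \<open>(m + 1) \<times> (m + 1)\<close> minor is nonzero.\<close>

lemma rank_Cpow_nat:
  assumes "inc_vec p x" "inc_vec p y" "\<And>j k. j < p \<Longrightarrow> k < p \<Longrightarrow> 0 < 1 + x j * y k"
    and "m < p"
  shows "vec_space.rank p (Cpow p x y (real m)) = m + 1"
proof (rule antisym)
  have entry: "(1 + x j * y k) powr real m = (\<Sum>i<Suc m. (of_nat (m choose i) * x j ^ i) * y k ^ i)"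
    if "j < p" "k < p" for j k
  proof -
    have "(1 + x j * y k) powr real m = (x j * y k + 1) ^ m"
      using assms(3) that by (simp add: powr_realpow add.commute)
    also have "\<dots> = (\<Sum>i<Suc m. (of_nat (m choose i) * x j ^ i) * y k ^ i)"
      by (simp add: binomial_ring lessThan_Suc_atMost power_mult_distrib mult.assoc)
    finally show ?thesis .
  qed
  have "Cpow p x y (real m) = mat p p (\<lambda>(j,k). \<Sum>i<Suc m. (of_nat (m choose i) * x j ^ i) * y k ^ i)"
    unfolding Cpow_def using entry by (intro eq_matI) auto
  then show "vec_space.rank p (Cpow p x y (real m)) \<le> m + 1"
    using rank_sum_of_products_le[where n = p and q = "Suc m"
        and f = "\<lambda>i j. of_nat (m choose i) * x j ^ i" and g = "\<lambda>i k. y k ^ i"] by simp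
next
  define I where "I = {0..<Suc m}"
  have I: "I \<subseteq> {0..<p}" "I \<noteq> {}" "card I = Suc m"
    using assms(4) by (auto simp: I_def)
  then have "det (submatrix (Cpow p x y (real m)) I I) \<noteq> 0"
    using Cpow_minor_sign[of p x y I I "real m"] assms I by fastforce
  then have "card {j. j < p \<and> j \<in> I} \<le> vec_space.rank p (Cpow p x y (real m))"
    by (intro vec_space.rank_gt_minor) (auto simp: Cpow_def)
  moreover have "{j. j < p \<and> j \<in> I} = I"
    using I(1) by auto
  ultimately show "m + 1 \<le> vec_space.rank p (Cpow p x y (real m))"
    using I(3) by simp
qed

text \<open>For non-integral \<open>a \<in> (0, p - 2)\<close> the leading principal minor of size \<open>r = \<lfloor>a\<rfloor> + 3\<close> has
  sign \<open>Cpow_sign r a = -1\<close>, since \<open>r - 3 < a < r - 2\<close>.\<close>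

lemma Cpow_principal_minor_neg:
  assumes "inc_vec p x" "inc_vec p y" "\<And>j k. j < p \<Longrightarrow> k < p \<Longrightarrow> 0 < 1 + x j * y k"
    and "0 < a" "a < real p - 2" "a \<notin> \<int>"
  shows "\<exists>J. J \<subseteq> {0..<p} \<and> J \<noteq> {} \<and> det (submatrix (Cpow p x y a) J J) < 0"
proof -
  define r where "r = nat \<lfloor>a\<rfloor> + 3"
  have r: "real r = real_of_int \<lfloor>a\<rfloor> + 3"
    using assms(4) by (simp add: r_def)
  have "real_of_int \<lfloor>a\<rfloor> \<noteq> a"
    using assms(6) by (metis Ints_of_int)
  then have "real r - 3 < a" "a < real r - 2"
    using r of_int_floor_le[of a] by linarith+
  then have sign: "Cpow_sign r a = -1"
    by (intro Cpow_sign_eq_minus_1) (auto simp: r_def)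
  have J: "{0..<r} \<subseteq> {0..<p}" "{0..<r} \<noteq> {}"
    using \<open>real r - 3 < a\<close> assms(5) by (auto simp: r_def)
  have "\<And>j. a \<noteq> real j"
    using assms(6) Ints_of_nat by metis
  then have "0 < Cpow_sign r a * det (submatrix (Cpow p x y a) {0..<r} {0..<r})"
    using Cpow_minor_sign[of p x y "{0..<r}" "{0..<r}" a] assms J by simp
  with sign J show ?thesis
    by (intro exI[of _ "{0..<r}"]) simp
qed

theorem mainTheorem8:
  fixes p :: nat and x y :: "nat \<Rightarrow> real"
  assumes "p \<ge> 2"
    and "inc_vec p x" and "inc_vec p y"
    and "\<And>j k. j < p \<Longrightarrow> k < p \<Longrightarrow> 1 + x j * y k > 0"
  shows "(\<forall>\<alpha>::real. \<alpha> > real p - 2 \<longrightarrow> TP_mat (Cpow p x y \<alpha>))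
    \<and> (\<forall>m::nat. m \<le> p - 2 \<longrightarrow> vec_space.rank p (Cpow p x y (real m)) = m + 1)
    \<and> (\<forall>\<alpha>::real. 0 < \<alpha> \<and> \<alpha> < real p - 2 \<and> \<alpha> \<notin> \<int> \<longrightarrow>
         \<not> TN_mat (Cpow p x y \<alpha>)
         \<and> (\<exists>J. J \<subseteq> {0..<p} \<and> J \<noteq> {} \<and> det (submatrix (Cpow p x y \<alpha>) J J) < 0))"
proof (intro conjI allI impI)
  show "TP_mat (Cpow p x y \<alpha>)" if "\<alpha> > real p - 2" for \<alpha>
    using Cpow_TP[OF assms(2-4) that] .
  show "vec_space.rank p (Cpow p x y (real m)) = m + 1" if "m \<le> p - 2" for m
    using rank_Cpow_nat[OF assms(2-4)] that assms(1) by simp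
  fix \<alpha> :: real
  assume "0 < \<alpha> \<and> \<alpha> < real p - 2 \<and> \<alpha> \<notin> \<int>"
  then obtain J where J: "J \<subseteq> {0..<p}" "J \<noteq> {}" "det (submatrix (Cpow p x y \<alpha>) J J) < 0"
    using Cpow_principal_minor_neg[OF assms(2-4)] by blast
  then show "\<exists>J. J \<subseteq> {0..<p} \<and> J \<noteq> {} \<and> det (submatrix (Cpow p x y \<alpha>) J J) < 0"
    by blast
  from J show "\<not> TN_mat (Cpow p x y \<alpha>)"
    unfolding TN_mat_def by (auto simp: Cpow_def not_le)
qed

end
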